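(* Consider the discrete-time nonlinear system $x^+=AM(x)+Bu$ with (unknown) $A\in\mathbb{R}^{n\times N}$, $B\in\mathbb{R}^{n\times m}$, $M(x)=\begin{bmatrix}x\\ \mathcal{Z}(x)\end{bmatrix}\in\mathbb{R}^N$, $\mathcal{Z}:\mathbb{R}^n\to\mathbb{R}^{N-n}$, state set $X\subset\mathbb{R}^n$, initial set $X_{\mathcal I}\subset X$ and unsafe set $X_{\mathcal U}\subset X$. Let $\mathcal{U}_0=[u(0),\dots,u(T-1)]$, $\mathcal{X}_1=[x(1),\dots,x(T)]$ and $\mathcal{M}_0=[M(x(0)),\dots,M(x(T-1))]$ be built from a single trajectory $x(t+1)=AM(x(t))+Bu(t)$, with $\mathcal{M}_0$ of full row rank, and let $Q=[Q_1~Q_2]\in\mathbb{R}^{T\times N}$ ($Q_1\in\mathbb{R}^{T\times n}$, $Q_2\in\mathbb{R}^{T\times(N-n)}$) satisfy $\mathcal{M}_0Q=\mathbb{I}_N$ and $\mathcal{X}_1Q_2=\mathbf{0}_{n\times(N-n)}$. Suppose there exist a symmetric positive-definite $P\in\mathbb{R}^{n\times n}$, $k\in\mathbb{N}_{>0}$, and $\gamma,\lambda,\epsilon\in\mathbb{R}_{\ge0}$ with $\lambda>\gamma+(k-1)\epsilon$ such that (i) $x^\top Px\le\gamma$ for all $x\in X_{\mathcal I}$; (ii) $x^\top Px\ge\lambda$ for all $x\in X_{\mathcal U}$; (iii) $x^\top Q_1^\top\mathcal{X}_1^\top P\mathcal{X}_1Q_1x\le x^\top Px+\epsilon$ for all $x\in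 X$; (iv) $((\mathcal{X}_1Q_1)^k)^\top P(\mathcal{X}_1Q_1)^k\preceq P$. Then $\mathcal{B}(x)=x^\top Px$ is a $k$-inductive control barrier certificate and $u=\mathcal{U}_0QM(x)$ a corresponding safety controller; that is, $\mathcal{B}\le\gamma$ on $X_{\mathcal I}$, $\mathcal{B}\ge\lambda$ on $X_{\mathcal U}$, and for all $x\in X$, with $x^+=AM(x)+B\,\mathcal{U}_0QM(x)$ and $x^{k+}$ the state after $k$ steps of this closed loop, $\mathcal{B}(x^+)\le\mathcal{B}(x)+\epsilon$ and $\mathcal{B}(x^{k+})\le\mathcal{B}(x)$.
   Context: $\preceq$ is the Loewner order. A function $\mathcal{B}:X\to\mathbb{R}_{\ge0}$ is a $k$-inductive control barrier certificate ($k$-CBC) if there are $k\in\mathbb{N}_{>0}$, $\gamma,\lambda,\epsilon\ge0$ with $\lambda>\gamma+(k-1)\epsilon$ such that $\mathcal{B}\le\gamma$ on $X_{\mathcal I}$, $\mathcal{B}\ge\lambda$ on $X_{\mathcal U}$, and for all $x\in X$ there is an input with $\mathcal{B}(x^+)\le\mathcal{B}(x)+\epsilon$ and $\mathcal{B}(x^{k+})\le\mathcal{B}(x)$, $x^{k+}$ being the state after $k$ steps; a feedback realizing these is a safety controller. *)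

theory Defs
  imports "Jordan_Normal_Form.Matrix" "Jordan_Normal_Form.DL_Rank"
begin

definition sym_pos_def_mat :: "nat \<Rightarrow> real mat \<Rightarrow> bool" where
  "sym_pos_def_mat n P \<longleftrightarrow> P \<in> carrier_mat n n \<and> transpose_mat P = P \<and>
     (\<forall>v \<in> carrier_vec n. v \<noteq> 0\<^sub>v n \<longrightarrow> v \<bullet> (P *\<^sub>v v) > 0)"

definition loewner_le :: "nat \<Rightarrow> real mat \<Rightarrow> real mat \<Rightarrow> bool" where
  "loewner_le n C D \<longleftrightarrow> C \<in> carrier_mat n n \<and> D \<in> carrier_mat n n \<and>
     (\<forall>v \<in> carrier_vec n. v \<bullet> ((D - C) *\<^sub>v v) \<ge> 0)"

definition kCBC_with_controller ::
  "real vec set \<Rightarrow> real vec set \<Rightarrow> real vec set \<Rightarrow> (real vec \<Rightarrow> real vec \<Rightarrow> real vec)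
   \<Rightarrow> (real vec \<Rightarrow> real) \<Rightarrow> (real vec \<Rightarrow> real vec) \<Rightarrow> nat \<Rightarrow> real \<Rightarrow> real \<Rightarrow> real \<Rightarrow> bool" where
  "kCBC_with_controller X XI XU f Bc c k \<gamma> lam \<epsilon> \<longleftrightarrow>
     k > 0 \<and> \<gamma> \<ge> 0 \<and> lam \<ge> 0 \<and> \<epsilon> \<ge> 0 \<and> lam > \<gamma> + (real k - 1) * \<epsilon> \<and>
     (\<forall>x \<in> X. Bc x \<ge> 0) \<and>
     (\<forall>x \<in> XI. Bc x \<le> \<gamma>) \<and>
     (\<forall>x \<in> XU. Bc x \<ge> lam) \<and>
     (\<forall>x \<in> X. Bc (f x (c x)) \<le> Bc x + \<epsilon> \<and>
               Bc (((\<lambda>y. f y (c y)) ^^ k) x) \<le> Bc x)"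

end

theory Submission
  imports Defs
begin

text \<open>Evaluating the data relation \<open>X\<^sub>1 = A \<M>\<^sub>0 + B \<U>\<^sub>0\<close> at \<open>Q\<close> and using \<open>\<M>\<^sub>0 Q = I\<close>
  gives \<open>A w + B \<U>\<^sub>0 Q w = X\<^sub>1 Q w\<close> for every \<open>w\<close>. With \<open>w = M(x) = [x; \<Z>(x)]\<close> and
  \<open>X\<^sub>1 Q\<^sub>2 = 0\<close> the closed loop becomes the linear system \<open>x\<^sup>+ = K x\<close>, \<open>K = X\<^sub>1 Q\<^sub>1\<close>, whatever
  the unknown \<open>A\<close>, \<open>B\<close> and \<open>\<Z>\<close> are. Hence \<open>\<B>(x\<^sup>+) = x\<^sup>T K\<^sup>T P K x\<close> and
  \<open>\<B>(x\<^sup>k\<^sup>+) = x\<^sup>T (K\<^sup>k)\<^sup>T P K\<^sup>k x\<close>, and conditions (iii) and (iv) are literally the two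
  decrease conditions of a \<open>k\<close>-CBC.\<close>

lemma mat_columns_mult_add:
  fixes A B :: "'a :: comm_ring_1 mat"
  assumes A: "A \<in> carrier_mat n N" and B: "B \<in> carrier_mat n m"
    and a: "\<And>j. j < T \<Longrightarrow> a j \<in> carrier_vec N"
    and b: "\<And>j. j < T \<Longrightarrow> b j \<in> carrier_vec m"
  shows "mat n T (\<lambda>(i, j). (A *\<^sub>v a j + B *\<^sub>v b j) $ i)
       = A * mat N T (\<lambda>(i, j). a j $ i) + B * mat m T (\<lambda>(i, j). b j $ i)"
proof (rule eq_matI)
  fix i j assume "i < dim_row (A * mat N T (\<lambda>(i, j). a j $ i) + B * mat m T (\<lambda>(i, j). b j $ i))"
    and "j < dim_col (A * mat N T (\<lambda>(i, j). a j $ i) + B * mat m T (\<lambda>(i, j). b j $ i))"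
  then have i: "i < n" and j: "j < T" using A B by auto
  have "col (mat N T (\<lambda>(i, j). a j $ i)) j = a j" "col (mat m T (\<lambda>(i, j). b j $ i)) j = b j"
    using j a[OF j] b[OF j] by (auto intro!: eq_vecI)
  then show "mat n T (\<lambda>(i, j). (A *\<^sub>v a j + B *\<^sub>v b j) $ i) $$ (i, j)
      = (A * mat N T (\<lambda>(i, j). a j $ i) + B * mat m T (\<lambda>(i, j). b j $ i)) $$ (i, j)"
    using i j A B by auto
qed (use A B in auto)

lemma mult_mat_vec_append:
  assumes Q: "Q \<in> carrier_mat T N" and nN: "n \<le> N"
    and y: "y \<in> carrier_vec n" and z: "z \<in> carrier_vec (N - n)"
  shows "Q *\<^sub>v (y @\<^sub>v z) = mat T n (\<lambda>(i, j). Q $$ (i, j)) *\<^sub>v y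
                        + mat T (N - n) (\<lambda>(i, j). Q $$ (i, n + j)) *\<^sub>v z"
    (is "_ = ?Q1 *\<^sub>v y + ?Q2 *\<^sub>v z")
proof (rule eq_vecI)
  fix i assume "i < dim_vec (?Q1 *\<^sub>v y + ?Q2 *\<^sub>v z)"
  then have i: "i < T" by simp
  have "row Q i = row ?Q1 i @\<^sub>v row ?Q2 i"
    using i Q nN by (intro eq_vecI) auto
  then have "row Q i \<bullet> (y @\<^sub>v z) = row ?Q1 i \<bullet> y + row ?Q2 i \<bullet> z"
    using y z i by (auto intro: scalar_prod_append)
  then show "(Q *\<^sub>v (y @\<^sub>v z)) $ i = (?Q1 *\<^sub>v y + ?Q2 *\<^sub>v z) $ i"
    using i Q by simp
qed (use Q in simp)

lemma data_driven_closed_loop_linear: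
  fixes A B M0 U0 Q X1 :: "'a :: comm_ring_1 mat" and n m N T :: nat
  defines "Q1 \<equiv> mat T n (\<lambda>(i, j). Q $$ (i, j))"
    and "Q2 \<equiv> mat T (N - n) (\<lambda>(i, j). Q $$ (i, n + j))"
  assumes A: "A \<in> carrier_mat n N" and B: "B \<in> carrier_mat n m"
    and M0: "M0 \<in> carrier_mat N T" and U0: "U0 \<in> carrier_mat m T" and Q: "Q \<in> carrier_mat T N"
    and nN: "n \<le> N"
    and X1_eq: "X1 = A * M0 + B * U0"
    and M0Q: "M0 * Q = 1\<^sub>m N"
    and X1Q2: "X1 * Q2 = 0\<^sub>m n (N - n)"
    and y: "y \<in> carrier_vec n" and z: "z \<in> carrier_vec (N - n)"
  shows "A *\<^sub>v (y @\<^sub>v z) + B *\<^sub>v ((U0 * Q) *\<^sub>v (y @\<^sub>v z)) = (X1 * Q1) *\<^sub>v y"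
proof -
  define w where "w = y @\<^sub>v z"
  have w: "w \<in> carrier_vec N"
    unfolding w_def using append_carrier_vec[OF y z] nN by simp
  have X1: "X1 \<in> carrier_mat n T" using X1_eq A B M0 U0 by simp
  have Q1: "Q1 \<in> carrier_mat T n" and Q2: "Q2 \<in> carrier_mat T (N - n)"
    unfolding Q1_def Q2_def by auto
  have "A * M0 * Q = A"
    using A M0Q by (simp add: assoc_mult_mat[OF A M0 Q])
  moreover have "(B * U0 * Q) *\<^sub>v w = B *\<^sub>v ((U0 * Q) *\<^sub>v w)"
    unfolding assoc_mult_mat[OF B U0 Q] using assoc_mult_mat_vec[OF B mult_carrier_mat[OF U0 Q] w] .
  ultimately have "A *\<^sub>v w + B *\<^sub>v ((U0 * Q) *\<^sub>v w) = (A * M0 * Q) *\<^sub>v w + (B * U0 * Q) *\<^sub>v w"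
    by simp
  also have "\<dots> = (X1 * Q) *\<^sub>v w"
    using A B M0 U0 Q w unfolding X1_eq
    by (simp add: add_mult_distrib_mat[of _ n T _ _ N] add_mult_distrib_mat_vec[of _ n N]
        del: assoc_mult_mat_vec)
  also have "\<dots> = X1 *\<^sub>v (Q1 *\<^sub>v y + Q2 *\<^sub>v z)"
    using assoc_mult_mat_vec[OF X1 Q w] mult_mat_vec_append[OF Q nN y z]
    unfolding w_def Q1_def Q2_def by simp
  also have "\<dots> = (X1 * Q1) *\<^sub>v y + (X1 * Q2) *\<^sub>v z"
    using mult_add_distrib_mat_vec[OF X1 mult_mat_vec_carrier[OF Q1 y] mult_mat_vec_carrier[OF Q2 z]]
      assoc_mult_mat_vec[OF X1 Q1 y] assoc_mult_mat_vec[OF X1 Q2 z] by simp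
  also have "(X1 * Q2) *\<^sub>v z = 0\<^sub>v n"
    using z unfolding X1Q2 by (intro eq_vecI) (auto simp: scalar_prod_def)
  finally show ?thesis
    using mult_mat_vec_carrier[OF mult_carrier_mat[OF X1 Q1] y] unfolding w_def by simp
qed

lemma quadratic_form_mult_mat_vec:
  fixes L P :: "'a :: comm_ring_1 mat"
  assumes L: "L \<in> carrier_mat p n" and P: "P \<in> carrier_mat p p" and y: "y \<in> carrier_vec n"
  shows "(L *\<^sub>v y) \<bullet> (P *\<^sub>v (L *\<^sub>v y)) = y \<bullet> ((transpose_mat L * P * L) *\<^sub>v y)"
proof -
  have LP: "transpose_mat L * P \<in> carrier_mat n p" using L P by simp
  have "(transpose_mat L * P * L) *\<^sub>v y = transpose_mat L *\<^sub>v (P *\<^sub>v (L *\<^sub>v y))"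
    using assoc_mult_mat_vec[OF LP L y] assoc_mult_mat_vec[of _ n p P p] L P y by simp
  moreover have "(L *\<^sub>v y) \<bullet> (P *\<^sub>v (L *\<^sub>v y)) = y \<bullet> (transpose_mat L *\<^sub>v (P *\<^sub>v (L *\<^sub>v y)))"
    using transpose_vec_mult_scalar[of "transpose_mat L" n p "P *\<^sub>v (L *\<^sub>v y)" y] L P y by auto
  ultimately show ?thesis by simp
qed

lemma funpow_eq_mat_pow_mult_vec:
  assumes K: "K \<in> carrier_mat n n"
    and g: "\<And>y. y \<in> carrier_vec n \<Longrightarrow> g y = K *\<^sub>v y"
    and y: "y \<in> carrier_vec n"
  shows "(g ^^ j) y = (K ^\<^sub>m j) *\<^sub>v y"
  using y
proof (induction j arbitrary: y)
  case 0
  then show ?case using K by simp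
next
  case (Suc j)
  have "(g ^^ Suc j) y = (K ^\<^sub>m j) *\<^sub>v (K *\<^sub>v y)"
    using Suc K g by (simp add: funpow_Suc_right del: funpow.simps)
  also have "\<dots> = (K ^\<^sub>m Suc j) *\<^sub>v y"
    using K Suc.prems by (simp add: assoc_mult_mat_vec[of _ n n K n])
  finally show ?case .
qed

lemma loewner_le_quadratic_form:
  assumes "loewner_le n C D" and y: "y \<in> carrier_vec n"
  shows "y \<bullet> (C *\<^sub>v y) \<le> y \<bullet> (D *\<^sub>v y)"
proof -
  have C: "C \<in> carrier_mat n n" and D: "D \<in> carrier_mat n n"
    and "y \<bullet> ((D - C) *\<^sub>v y) \<ge> 0"
    using assms unfolding loewner_le_def by auto
  moreover have "y \<bullet> ((D - C) *\<^sub>v y) = y \<bullet> (D *\<^sub>v y) - y \<bullet> (C *\<^sub>v y)"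
    using C D y by (simp add: minus_mult_distrib_mat_vec scalar_prod_minus_distrib[of y n])
  ultimately show ?thesis by simp
qed

lemma sym_pos_def_mat_quadratic_form_nonneg:
  assumes "sym_pos_def_mat n P" and "y \<in> carrier_vec n"
  shows "y \<bullet> (P *\<^sub>v y) \<ge> 0"
  using assms unfolding sym_pos_def_mat_def
  by (cases "y = 0\<^sub>v n") force+

lemma kCBC_quadratic_of_linear_closed_loop:
  fixes K P :: "real mat"
  assumes K: "K \<in> carrier_mat n n"
    and closed_loop: "\<And>y. y \<in> carrier_vec n \<Longrightarrow> f y (c y) = K *\<^sub>v y"
    and X_sub: "X \<subseteq> carrier_vec n"
    and P_pd: "sym_pos_def_mat n P"
    and params: "k > 0" "\<gamma> \<ge> 0" "lam \<ge> 0" "\<epsilon> \<ge> 0" "lam > \<gamma> + (real k - 1) * \<epsilon>"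
    and init: "\<And>y. y \<in> XI \<Longrightarrow> y \<bullet> (P *\<^sub>v y) \<le> \<gamma>"
    and unsafe: "\<And>y. y \<in> XU \<Longrightarrow> y \<bullet> (P *\<^sub>v y) \<ge> lam"
    and one_step: "\<And>y. y \<in> X \<Longrightarrow> y \<bullet> ((transpose_mat K * P * K) *\<^sub>v y) \<le> y \<bullet> (P *\<^sub>v y) + \<epsilon>"
    and k_step: "loewner_le n (transpose_mat (K ^\<^sub>m k) * P * K ^\<^sub>m k) P"
  shows "kCBC_with_controller X XI XU f (\<lambda>y. y \<bullet> (P *\<^sub>v y)) c k \<gamma> lam \<epsilon>"
proof -
  have P: "P \<in> carrier_mat n n" using P_pd unfolding sym_pos_def_mat_def by simp
  have "f y (c y) \<bullet> (P *\<^sub>v f y (c y)) \<le> y \<bullet> (P *\<^sub>v y) + \<epsilon>" if "y \<in> X" for y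
    using that X_sub one_step closed_loop quadratic_form_mult_mat_vec[OF K P] by auto
  moreover have "((\<lambda>y. f y (c y)) ^^ k) y \<bullet> (P *\<^sub>v ((\<lambda>y. f y (c y)) ^^ k) y) \<le> y \<bullet> (P *\<^sub>v y)"
    if "y \<in> X" for y
  proof -
    have y: "y \<in> carrier_vec n" using that X_sub by auto
    have "((\<lambda>y. f y (c y)) ^^ k) y = (K ^\<^sub>m k) *\<^sub>v y"
      using funpow_eq_mat_pow_mult_vec[OF K closed_loop y] .
    then show ?thesis
      using quadratic_form_mult_mat_vec[OF pow_carrier_mat[OF K] P y]
        loewner_le_quadratic_form[OF k_step y] by simp
  qed
  moreover have "y \<bullet> (P *\<^sub>v y) \<ge> 0" if "y \<in> X" for y
    using that X_sub sym_pos_def_mat_quadratic_form_nonneg[OF P_pd] by auto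
  ultimately show ?thesis
    unfolding kCBC_with_controller_def using params init unsafe by auto
qed

theorem theorem3:
  fixes n m N T k :: nat
    and A B P Q :: "real mat"
    and Z :: "real vec \<Rightarrow> real vec"
    and X XI XU :: "real vec set"
    and x u :: "nat \<Rightarrow> real vec"
    and \<gamma> lam \<epsilon> :: real
  defines "M \<equiv> (\<lambda>y. y @\<^sub>v Z y)"
    and "U0 \<equiv> mat m T (\<lambda>(i, j). u j $ i)"
    and "X1 \<equiv> mat n T (\<lambda>(i, j). x (Suc j) $ i)"
    and "M0 \<equiv> mat N T (\<lambda>(i, j). (x j @\<^sub>v Z (x j)) $ i)"
    and "Q1 \<equiv> mat T n (\<lambda>(i, j). Q $$ (i, j))"
    and "Q2 \<equiv> mat T (N - n) (\<lambda>(i, j). Q $$ (i, n + j))"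
  assumes nN: "n \<le> N"
    and A_dim: "A \<in> carrier_mat n N"
    and B_dim: "B \<in> carrier_mat n m"
    and Z_dim: "\<And>y. y \<in> carrier_vec n \<Longrightarrow> Z y \<in> carrier_vec (N - n)"
    and X_sub: "X \<subseteq> carrier_vec n"
    and XI_sub: "XI \<subseteq> X"
    and XU_sub: "XU \<subseteq> X"
    and x0: "x 0 \<in> carrier_vec n"
    and u_dim: "\<And>t. t < T \<Longrightarrow> u t \<in> carrier_vec m"
    and traj: "\<And>t. t < T \<Longrightarrow> x (Suc t) = A *\<^sub>v M (x t) + B *\<^sub>v u t"
    and M0_rank: "vec_space.rank N M0 = N"
    and Q_dim: "Q \<in> carrier_mat T N"
    and M0Q: "M0 * Q = 1\<^sub>m N"
    and X1Q2: "X1 * Q2 = 0\<^sub>m n (N - n)"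
    and P_pd: "sym_pos_def_mat n P"
    and k_pos: "k > 0"
    and \<gamma>_nonneg: "\<gamma> \<ge> 0" and lam_nonneg: "lam \<ge> 0" and \<epsilon>_nonneg: "\<epsilon> \<ge> 0"
    and gap: "lam > \<gamma> + (real k - 1) * \<epsilon>"
    and c1: "\<And>y. y \<in> XI \<Longrightarrow> y \<bullet> (P *\<^sub>v y) \<le> \<gamma>"
    and c2: "\<And>y. y \<in> XU \<Longrightarrow> y \<bullet> (P *\<^sub>v y) \<ge> lam"
    and c3: "\<And>y. y \<in> X \<Longrightarrow>
              y \<bullet> ((transpose_mat Q1 * transpose_mat X1 * P * X1 * Q1) *\<^sub>v y) \<le> y \<bullet> (P *\<^sub>v y) + \<epsilon>"
    and c4: "loewner_le n (transpose_mat ((X1 * Q1) ^\<^sub>m k) * P * (X1 * Q1) ^\<^sub>m k) P"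
  shows "kCBC_with_controller X XI XU (\<lambda>y v. A *\<^sub>v M y + B *\<^sub>v v)
           (\<lambda>y. y \<bullet> (P *\<^sub>v y)) (\<lambda>y. (U0 * Q) *\<^sub>v M y) k \<gamma> lam \<epsilon>"
proof -
  have X1_dim: "X1 \<in> carrier_mat n T" and Q1_dim: "Q1 \<in> carrier_mat T n"
    and M0_dim: "M0 \<in> carrier_mat N T" and U0_dim: "U0 \<in> carrier_mat m T"
    unfolding X1_def Q1_def M0_def U0_def by auto
  have P_dim: "P \<in> carrier_mat n n" using P_pd unfolding sym_pos_def_mat_def by simp
  have x_dim: "x t \<in> carrier_vec n" if "t \<le> T" for t
  proof (cases t)
    case (Suc s)
    then have "x t = A *\<^sub>v M (x s) + B *\<^sub>v u s" using traj that by simp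
    then show ?thesis using B_dim by (intro carrier_vecI) simp
  qed (use x0 in simp)
  have M_dim: "M y \<in> carrier_vec N" if "y \<in> carrier_vec n" for y
    unfolding M_def using that Z_dim nN by (metis append_carrier_vec le_add_diff_inverse)
  have "X1 = mat n T (\<lambda>(i, j). (A *\<^sub>v M (x j) + B *\<^sub>v u j) $ i)"
    unfolding X1_def using traj by (intro cong_mat) auto
  also have "\<dots> = A * M0 + B * U0"
    using A_dim B_dim M_dim x_dim u_dim unfolding M0_def U0_def M_def
    by (intro mat_columns_mult_add) auto
  finally have X1_eq: "X1 = A * M0 + B * U0" .
  have closed_loop: "A *\<^sub>v M y + B *\<^sub>v ((U0 * Q) *\<^sub>v M y) = (X1 * Q1) *\<^sub>v y"
    if "y \<in> carrier_vec n" for y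
    using data_driven_closed_loop_linear[OF A_dim B_dim M0_dim U0_dim Q_dim nN X1_eq M0Q
        X1Q2[unfolded Q2_def] that Z_dim[OF that]]
    unfolding M_def Q1_def .
  have "transpose_mat (X1 * Q1) * P * (X1 * Q1) = transpose_mat Q1 * transpose_mat X1 * P * X1 * Q1"
    using X1_dim Q1_dim P_dim by (simp add: transpose_mult assoc_mult_mat[of _ n n X1 T Q1 n])
  then show ?thesis
    using kCBC_quadratic_of_linear_closed_loop[of "X1 * Q1" n "\<lambda>y v. A *\<^sub>v M y + B *\<^sub>v v"]
      X1_dim Q1_dim closed_loop X_sub P_pd k_pos \<gamma>_nonneg lam_nonneg \<epsilon>_nonneg gap c1 c2 c3 c4
    by auto
qed

end
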